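(* Let $(A,\leq,\cdot,/)$ be a narhoop and let $N$ be a nonempty normal subnarhoop of $A$. Define $\theta_N$ on $A$ by $x\mathrel{\theta_N} y$ iff $x/y\in N$ and $y/x\in N$. Then $\theta_N$ is a unital congruence on $(A,\cdot,/)$, and $N_{\theta_N}=N$.
   Context: Write $xy$ for $x\cdot y$; $\cdot$ binds more strongly than $/$, and $/$ binds more strongly than $\sqcap$, where $x\sqcap y := (x/y)y$. A right-residuated magma is a structure $(A,\leq,\cdot,/)$ where $(A,\leq)$ is a poset and $xy\leq z\iff x\leq z/y$ for all $x,y,z\in A$. A narhoop is a right-residuated magma such that for all $x,y$: $x\leq y\iff x\sqcap y = x = y\sqcap x$. A congruence $\theta$ on $(A,\cdot,/)$ is unital if $x/x\mathrel{\theta} y/y$ for all $x,y\in A$; for such $\theta$, $N_\theta=\{x\in A\mid x\mathrel{\theta} y/y \text{ for some (equivalently, all) } y\in A\}$. For $x,y\in A$ define maps $A\to A$ by $\phi_{1,x,y}(z)=((zx)y)/(xy)$, $\phi_{2,x,y}(z)=((zx)/y)/(x/y)$, $\phi_{3,x,y}(z)=(x(zy))/(xy)$, $\phi_{4,x,y}(z)=(x/(zy))/(x/y)$, $\phi_{5,x,y}(z)=(xy)/(x(zy))$, $\phi_{6,x,y}(z)=(x/y)/(x/(zy))$; $\mathrm{Inn}(A)$ is the semigroup of maps generated by all of these under composition. A nonempty subset $N\subseteq A$ is a normal subnarhoop if (i) $N$ is closed under $\cdot$ and $/$; (ii) whenever $x\leq y$ and $x\in N$, then $y\in N$; (iii)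 $\phi(N)\subseteq N$ for all $\phi\in\mathrm{Inn}(A)$. *)

theory Defs
  imports Main
begin

text \<open>A right-residuated magma presented on an explicit carrier set A with an order
relation le, multiplication m (x y = m x y) and right residual r (x / y = r x y).\<close>

definition rr_magma :: "'a set \<Rightarrow> ('a \<Rightarrow> 'a \<Rightarrow> bool) \<Rightarrow> ('a \<Rightarrow> 'a \<Rightarrow> 'a) \<Rightarrow> ('a \<Rightarrow> 'a \<Rightarrow> 'a) \<Rightarrow> bool" where
  "rr_magma A le m r \<longleftrightarrow>
     (\<forall>x\<in>A. le x x) \<and>
     (\<forall>x\<in>A. \<forall>y\<in>A. le x y \<and> le y x \<longrightarrow> x = y) \<and>
     (\<forall>x\<in>A. \<forall>y\<in>A. \<forall>z\<in>A. le x y \<and> le y z \<longrightarrow> le x z) \<and>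
     (\<forall>x\<in>A. \<forall>y\<in>A. m x y \<in> A \<and> r x y \<in> A) \<and>
     (\<forall>x\<in>A. \<forall>y\<in>A. \<forall>z\<in>A. le (m x y) z \<longleftrightarrow> le x (r z y))"

definition meetop :: "('a \<Rightarrow> 'a \<Rightarrow> 'a) \<Rightarrow> ('a \<Rightarrow> 'a \<Rightarrow> 'a) \<Rightarrow> 'a \<Rightarrow> 'a \<Rightarrow> 'a" where
  "meetop m r x y = m (r x y) y"

definition narhoop :: "'a set \<Rightarrow> ('a \<Rightarrow> 'a \<Rightarrow> bool) \<Rightarrow> ('a \<Rightarrow> 'a \<Rightarrow> 'a) \<Rightarrow> ('a \<Rightarrow> 'a \<Rightarrow> 'a) \<Rightarrow> bool" where
  "narhoop A le m r \<longleftrightarrow> rr_magma A le m r \<and>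
     (\<forall>x\<in>A. \<forall>y\<in>A. le x y \<longleftrightarrow> (meetop m r x y = x \<and> meetop m r y x = x))"

definition congruence2 :: "'a set \<Rightarrow> ('a \<Rightarrow> 'a \<Rightarrow> 'a) \<Rightarrow> ('a \<Rightarrow> 'a \<Rightarrow> 'a) \<Rightarrow> ('a \<times> 'a) set \<Rightarrow> bool" where
  "congruence2 A m r \<theta> \<longleftrightarrow> equiv A \<theta> \<and>
     (\<forall>x1 x2 y1 y2. (x1, x2) \<in> \<theta> \<and> (y1, y2) \<in> \<theta> \<longrightarrow>
        (m x1 y1, m x2 y2) \<in> \<theta> \<and> (r x1 y1, r x2 y2) \<in> \<theta>)"

definition unital_congruence :: "'a set \<Rightarrow> ('a \<Rightarrow> 'a \<Rightarrow> 'a) \<Rightarrow> ('a \<Rightarrow> 'a \<Rightarrow> 'a) \<Rightarrow> ('a \<times> 'a) set \<Rightarrow> bool" where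
  "unital_congruence A m r \<theta> \<longleftrightarrow> congruence2 A m r \<theta> \<and>
     (\<forall>x\<in>A. \<forall>y\<in>A. (r x x, r y y) \<in> \<theta>)"

definition N_of :: "'a set \<Rightarrow> ('a \<Rightarrow> 'a \<Rightarrow> 'a) \<Rightarrow> ('a \<times> 'a) set \<Rightarrow> 'a set" where
  "N_of A r \<theta> = {x \<in> A. \<exists>y\<in>A. (x, r y y) \<in> \<theta>}"

definition phi1 where "phi1 m r x y = (\<lambda>z. r (m (m z x) y) (m x y))"
definition phi2 where "phi2 m r x y = (\<lambda>z. r (r (m z x) y) (r x y))"
definition phi3 where "phi3 m r x y = (\<lambda>z. r (m x (m z y)) (m x y))"
definition phi4 where "phi4 m r x y = (\<lambda>z. r (r x (m z y)) (r x y))"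
definition phi5 where "phi5 m r x y = (\<lambda>z. r (m x y) (m x (m z y)))"
definition phi6 where "phi6 m r x y = (\<lambda>z. r (r x y) (r x (m z y)))"

inductive_set Inn :: "'a set \<Rightarrow> ('a \<Rightarrow> 'a \<Rightarrow> 'a) \<Rightarrow> ('a \<Rightarrow> 'a \<Rightarrow> 'a) \<Rightarrow> ('a \<Rightarrow> 'a) set"
  for A m r where
  gen1: "x \<in> A \<Longrightarrow> y \<in> A \<Longrightarrow> phi1 m r x y \<in> Inn A m r"
| gen2: "x \<in> A \<Longrightarrow> y \<in> A \<Longrightarrow> phi2 m r x y \<in> Inn A m r"
| gen3: "x \<in> A \<Longrightarrow> y \<in> A \<Longrightarrow> phi3 m r x y \<in> Inn A m r"
| gen4: "x \<in> A \<Longrightarrow> y \<in> A \<Longrightarrow> phi4 m r x y \<in> Inn A m r"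
| gen5: "x \<in> A \<Longrightarrow> y \<in> A \<Longrightarrow> phi5 m r x y \<in> Inn A m r"
| gen6: "x \<in> A \<Longrightarrow> y \<in> A \<Longrightarrow> phi6 m r x y \<in> Inn A m r"
| comp: "f \<in> Inn A m r \<Longrightarrow> g \<in> Inn A m r \<Longrightarrow> f \<circ> g \<in> Inn A m r"

definition normal_subnarhoop :: "'a set \<Rightarrow> ('a \<Rightarrow> 'a \<Rightarrow> bool) \<Rightarrow> ('a \<Rightarrow> 'a \<Rightarrow> 'a) \<Rightarrow> ('a \<Rightarrow> 'a \<Rightarrow> 'a) \<Rightarrow> 'a set \<Rightarrow> bool" where
  "normal_subnarhoop A le m r N \<longleftrightarrow>
     N \<noteq> {} \<and> N \<subseteq> A \<and>
     (\<forall>x\<in>N. \<forall>y\<in>N. m x y \<in> N \<and> r x y \<in> N) \<and>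
     (\<forall>x\<in>A. \<forall>y\<in>A. le x y \<and> x \<in> N \<longrightarrow> y \<in> N) \<and>
     (\<forall>\<phi>\<in>Inn A m r. \<phi> ` N \<subseteq> N)"

definition theta_N :: "'a set \<Rightarrow> ('a \<Rightarrow> 'a \<Rightarrow> 'a) \<Rightarrow> 'a set \<Rightarrow> ('a \<times> 'a) set" where
  "theta_N A r N = {(x, y). x \<in> A \<and> y \<in> A \<and> r x y \<in> N \<and> r y x \<in> N}"

end

theory Submission
  imports Defs
begin

text \<open>Right multiplication and right division are handled by the inner maps
phi1 and phi2: applied to x/y \<in> N they give elements below xv/yv and x/v / (y/v).
Left multiplication and left division need phi3 to phi6 and the narhoop axiom:
if y1 \<theta> y2 then q = (y1/y2) y2 is simultaneously of the form s y2 and s' y1 with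
s, s' \<in> N, and the inner maps relate x y1 and x y2 (resp. x/y1 and x/y2) to x q.
The same device, with phi4 and phi3, shows that every x/x lies in N.\<close>

locale residuated_magma =
  fixes A :: "'a set" and le :: "'a \<Rightarrow> 'a \<Rightarrow> bool" and m r :: "'a \<Rightarrow> 'a \<Rightarrow> 'a"
  assumes rr_magma: "rr_magma A le m r"
begin

lemma leq_refl: "x \<in> A \<Longrightarrow> le x x"
  using rr_magma unfolding rr_magma_def by blast

lemma leq_trans: "x \<in> A \<Longrightarrow> y \<in> A \<Longrightarrow> z \<in> A \<Longrightarrow> le x y \<Longrightarrow> le y z \<Longrightarrow> le x z"
  using rr_magma unfolding rr_magma_def by blast

lemma mult_closed [simp]: "x \<in> A \<Longrightarrow> y \<in> A \<Longrightarrow> m x y \<in> A"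
  using rr_magma unfolding rr_magma_def by blast

lemma div_closed [simp]: "x \<in> A \<Longrightarrow> y \<in> A \<Longrightarrow> r x y \<in> A"
  using rr_magma unfolding rr_magma_def by blast

lemma residuation: "x \<in> A \<Longrightarrow> y \<in> A \<Longrightarrow> z \<in> A \<Longrightarrow> le (m x y) z \<longleftrightarrow> le x (r z y)"
  using rr_magma unfolding rr_magma_def by blast

lemma div_mult_le: "x \<in> A \<Longrightarrow> y \<in> A \<Longrightarrow> le (m (r x y) y) x"
  using residuation[of "r x y" y x] leq_refl by simp

lemma le_mult_div: "x \<in> A \<Longrightarrow> y \<in> A \<Longrightarrow> le x (r (m x y) y)"
  using residuation[of x y "m x y"] leq_refl by simp

lemma mult_right_mono: "u \<in> A \<Longrightarrow> u' \<in> A \<Longrightarrow> v \<in> A \<Longrightarrow> le u u' \<Longrightarrow> le (m u v) (m u' v)"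
  using residuation[of u v "m u' v"] le_mult_div[of u' v] leq_trans[of u u' "r (m u' v) v"]
  by simp

lemma div_right_mono: "u \<in> A \<Longrightarrow> u' \<in> A \<Longrightarrow> v \<in> A \<Longrightarrow> le u u' \<Longrightarrow> le (r u v) (r u' v)"
  using residuation[of "r u v" v u'] div_mult_le[of u v] leq_trans[of "m (r u v) v" u u']
  by simp

end

locale narhoop_algebra = residuated_magma +
  assumes narhoop: "narhoop A le m r"
begin

lemma le_iff_meet: "x \<in> A \<Longrightarrow> y \<in> A \<Longrightarrow> le x y \<longleftrightarrow> (m (r x y) y = x \<and> m (r y x) x = x)"
  using narhoop unfolding narhoop_def meetop_def by blast

lemma le_imp_div_mult_eq: "x \<in> A \<Longrightarrow> y \<in> A \<Longrightarrow> le x y \<Longrightarrow> m (r x y) y = x"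
  using le_iff_meet by blast

lemma div_self_mult: "x \<in> A \<Longrightarrow> m (r x x) x = x"
  using le_imp_div_mult_eq leq_refl by blast

end

locale narhoop_normal_subset = narhoop_algebra +
  fixes N :: "'a set"
  assumes normal: "normal_subnarhoop A le m r N"
begin

lemma N_subset: "x \<in> N \<Longrightarrow> x \<in> A"
  using normal unfolding normal_subnarhoop_def by blast

lemma N_nonempty: "N \<noteq> {}"
  using normal unfolding normal_subnarhoop_def by blast

lemma N_mult_closed: "x \<in> N \<Longrightarrow> y \<in> N \<Longrightarrow> m x y \<in> N"
  using normal unfolding normal_subnarhoop_def by blast

lemma N_div_closed: "x \<in> N \<Longrightarrow> y \<in> N \<Longrightarrow> r x y \<in> N"
  using normal unfolding normal_subnarhoop_def by blast

lemma N_up_closed: "x \<in> N \<Longrightarrow> y \<in> A \<Longrightarrow> le x y \<Longrightarrow> y \<in> N"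
  using normal N_subset unfolding normal_subnarhoop_def by blast

lemma N_Inn_closed: "\<phi> \<in> Inn A m r \<Longrightarrow> z \<in> N \<Longrightarrow> \<phi> z \<in> N"
  using normal unfolding normal_subnarhoop_def by blast

lemma N_modus_ponens: "c \<in> A \<Longrightarrow> d \<in> N \<Longrightarrow> r c d \<in> N \<Longrightarrow> c \<in> N"
  using N_mult_closed[of "r c d" d] div_mult_le[of c d] N_up_closed N_subset by blast

lemma div_self_mem: assumes w: "w \<in> A" shows "r w w \<in> N"
proof -
  obtain n where n: "n \<in> N" using N_nonempty by blast
  have nA: "n \<in> A" using n N_subset by blast
  define v where "v = r (m w n) n"
  have vA: "v \<in> A" using v_def w nA by simp
  have "phi4 m r (m w n) n (r n n) \<in> N"
    using N_Inn_closed[OF Inn.gen4 N_div_closed[OF n n]] w nA by simp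
  then have vv: "r v v \<in> N"
    unfolding phi4_def v_def using div_self_mult[OF nA] by simp
  have "le w v" unfolding v_def using le_mult_div w nA by simp
  then have w_eq: "m (r w v) v = w" using le_imp_div_mult_eq w vA by blast
  have "phi3 m r (r w v) v (r v v) \<in> N"
    using N_Inn_closed[OF Inn.gen3 vv] w vA by simp
  then show ?thesis unfolding phi3_def using div_self_mult[OF vA] w_eq by simp
qed

lemma div_mult_right_mem:
  assumes "x \<in> A" "y \<in> A" "v \<in> A" "r x y \<in> N"
  shows "r (m x v) (m y v) \<in> N"
proof -
  have "phi1 m r y v (r x y) \<in> N" using N_Inn_closed[OF Inn.gen1 assms(4)] assms by simp
  moreover have "le (phi1 m r y v (r x y)) (r (m x v) (m y v))"
    unfolding phi1_def using assms div_mult_le mult_right_mono div_right_mono by simp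
  ultimately show ?thesis using N_up_closed assms by simp
qed

lemma div_div_right_mem:
  assumes "x \<in> A" "y \<in> A" "v \<in> A" "r x y \<in> N"
  shows "r (r x v) (r y v) \<in> N"
proof -
  have "phi2 m r y v (r x y) \<in> N" using N_Inn_closed[OF Inn.gen2 assms(4)] assms by simp
  moreover have "le (phi2 m r y v (r x y)) (r (r x v) (r y v))"
    unfolding phi2_def using assms div_mult_le mult_right_mono div_right_mono by simp
  ultimately show ?thesis using N_up_closed assms by simp
qed

lemma div_trans_mem:
  "x \<in> A \<Longrightarrow> y \<in> A \<Longrightarrow> z \<in> A \<Longrightarrow> r x y \<in> N \<Longrightarrow> r y z \<in> N \<Longrightarrow> r x z \<in> N"
  using div_div_right_mem[of x y z] N_modus_ponens[of "r x z" "r y z"] by simp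

abbreviation \<theta> where "\<theta> \<equiv> theta_N A r N"

lemma theta_N_iff: "(x, y) \<in> \<theta> \<longleftrightarrow> x \<in> A \<and> y \<in> A \<and> r x y \<in> N \<and> r y x \<in> N"
  unfolding theta_N_def by simp

lemma theta_N_if_mem: "c \<in> N \<Longrightarrow> d \<in> N \<Longrightarrow> (c, d) \<in> \<theta>"
  using theta_N_iff N_div_closed N_subset by blast

lemma theta_N_sym: "(x, y) \<in> \<theta> \<Longrightarrow> (y, x) \<in> \<theta>"
  unfolding theta_N_iff by blast

lemma theta_N_trans: "(x, y) \<in> \<theta> \<Longrightarrow> (y, z) \<in> \<theta> \<Longrightarrow> (x, z) \<in> \<theta>"
  unfolding theta_N_iff using div_trans_mem by blast

lemma theta_N_equiv: "equiv A \<theta>"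
proof (rule equivI)
  show "\<theta> \<subseteq> A \<times> A" by (auto simp: theta_N_iff)
  show "refl_on A \<theta>"
    unfolding refl_on_def using div_self_mem by (auto simp: theta_N_iff)
  show "sym \<theta>" by (rule symI) (rule theta_N_sym)
  show "trans \<theta>" by (rule transI) (rule theta_N_trans)
qed

lemma theta_N_mult_right: "(x, y) \<in> \<theta> \<Longrightarrow> v \<in> A \<Longrightarrow> (m x v, m y v) \<in> \<theta>"
  unfolding theta_N_iff using div_mult_right_mem by simp

lemma theta_N_div_right: "(x, y) \<in> \<theta> \<Longrightarrow> v \<in> A \<Longrightarrow> (r x v, r y v) \<in> \<theta>"
  unfolding theta_N_iff using div_div_right_mem by simp

lemma theta_N_meet: assumes "(y1, y2) \<in> \<theta>" shows "(m (r y1 y2) y2, y1) \<in> \<theta>"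
proof -
  have y: "y1 \<in> A" "y2 \<in> A" "r y1 y2 \<in> N" using assms theta_N_iff by auto
  have "(r y1 y2, r y2 y2) \<in> \<theta>" using theta_N_if_mem y div_self_mem by simp
  then have "(m (r y1 y2) y2, m (r y2 y2) y2) \<in> \<theta>" using theta_N_mult_right y by simp
  then have "(m (r y1 y2) y2, y2) \<in> \<theta>" using div_self_mult y by simp
  then show ?thesis using theta_N_trans theta_N_sym assms by blast
qed

lemma theta_N_left_translate:
  assumes "x \<in> A" "y \<in> A" "s \<in> N"
  shows "(m x (m s y), m x y) \<in> \<theta>" "(r x (m s y), r x y) \<in> \<theta>"
proof -
  have "phi3 m r x y s \<in> N" "phi5 m r x y s \<in> N" "phi4 m r x y s \<in> N" "phi6 m r x y s \<in> N"
    using N_Inn_closed[OF Inn.gen3 assms(3)] N_Inn_closed[OF Inn.gen5 assms(3)]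
      N_Inn_closed[OF Inn.gen4 assms(3)] N_Inn_closed[OF Inn.gen6 assms(3)] assms by auto
  then show "(m x (m s y), m x y) \<in> \<theta>" "(r x (m s y), r x y) \<in> \<theta>"
    unfolding theta_N_iff phi3_def phi4_def phi5_def phi6_def
    using assms N_subset by auto
qed

lemma theta_N_left:
  assumes "(y1, y2) \<in> \<theta>" "x \<in> A"
  shows "(m x y1, m x y2) \<in> \<theta>" "(r x y1, r x y2) \<in> \<theta>"
proof -
  have y: "y1 \<in> A" "y2 \<in> A" "r y1 y2 \<in> N" using assms theta_N_iff by auto
  define q where "q = m (r y1 y2) y2"
  have "(q, y1) \<in> \<theta>" using theta_N_meet assms q_def by simp
  then have q: "q \<in> A" "r q y1 \<in> N" using theta_N_iff by auto
  have "le q y1" unfolding q_def using div_mult_le y by simp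
  then have q_eq: "m (r q y1) y1 = q" using le_imp_div_mult_eq q y by blast
  have "(m x q, m x y2) \<in> \<theta>" "(r x q, r x y2) \<in> \<theta>"
    using theta_N_left_translate[OF assms(2) y(2,3)] q_def by auto
  moreover have "(m x q, m x y1) \<in> \<theta>" "(r x q, r x y1) \<in> \<theta>"
    using theta_N_left_translate[OF assms(2) y(1) q(2)] q_eq by auto
  ultimately show "(m x y1, m x y2) \<in> \<theta>" "(r x y1, r x y2) \<in> \<theta>"
    using theta_N_trans theta_N_sym by blast+
qed

lemma theta_N_congruence: "congruence2 A m r \<theta>"
  unfolding congruence2_def
proof (intro conjI theta_N_equiv allI impI)
  fix x1 x2 y1 y2
  assume h: "(x1, x2) \<in> \<theta> \<and> (y1, y2) \<in> \<theta>"
  then have A: "x2 \<in> A" "y1 \<in> A" using theta_N_iff by auto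
  show "(m x1 y1, m x2 y2) \<in> \<theta>"
    using theta_N_mult_right theta_N_left(1) theta_N_trans h A by blast
  show "(r x1 y1, r x2 y2) \<in> \<theta>"
    using theta_N_div_right theta_N_left(2) theta_N_trans h A by blast
qed

lemma theta_N_unital: "unital_congruence A m r \<theta>"
  unfolding unital_congruence_def
  using theta_N_congruence theta_N_if_mem div_self_mem by simp

lemma N_of_theta_N: "N_of A r \<theta> = N"
proof
  show "N_of A r \<theta> \<subseteq> N"
  proof
    fix x assume "x \<in> N_of A r \<theta>"
    then obtain y where "x \<in> A" "y \<in> A" "(x, r y y) \<in> \<theta>" unfolding N_of_def by blast
    then show "x \<in> N" using N_modus_ponens[of x "r y y"] div_self_mem theta_N_iff by blast
  qed
  show "N \<subseteq> N_of A r \<theta>"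
  proof
    fix x assume x: "x \<in> N"
    then have "(x, r x x) \<in> \<theta>" using theta_N_if_mem div_self_mem N_subset by blast
    then show "x \<in> N_of A r \<theta>" unfolding N_of_def using x N_subset by blast
  qed
qed

end

theorem mainTheorem14:
  assumes "narhoop A le m r"
    and "normal_subnarhoop A le m r N"
  shows "unital_congruence A m r (theta_N A r N) \<and> N_of A r (theta_N A r N) = N"
proof -
  interpret narhoop_normal_subset A le m r N
    using assms by unfold_locales (auto simp: narhoop_def)
  show ?thesis using theta_N_unital N_of_theta_N by blast
qed

end
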